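(* Let $n \ge 8$ with $n\equiv 0\pmod 4$, $s$ an integer with $s^2\equiv 1\pmod n$, $s\not\equiv\pm1\pmod n$, and $G = \langle x,y \mid x^2 = y^{n/2},\ y^n = 1,\ yx = xy^s\rangle$. Let $T_1,\dots,T_{n-3}$ be sequences over $G$ with $|T_i|=2$ for all $i\in[1,n-3]$, let $T = T_1\cdot\ldots\cdot T_{n-3}$, and let $T_0$ be a sequence over $G$ with $|T_0|=4$ such that $\{y^{2w}, y^{2w+n/2}\}\subset\pi(T_0)$ for some integer $w$. Suppose there are integers $a,b$ with $\gcd(a-b,n/2)=1$ such that $y^{2a}\in\pi(T_i)$ for $i\in[1,\frac n2-1]$ and $y^{2b}\in\pi(T_i)$ for $i\in[\frac n2, n-3]$. Then $T\cdot T_0$ has a subsequence $T'$ of length $n$ with $1\in\pi(T')$ and $T_0$ a subsequence of $T'$.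
   Context: A sequence over $G$ is a finite unordered list of elements with repetition; $\cdot$ denotes concatenation. For $S=g_1\cdots g_k$, $\pi(S)$ is the set of all products $g_{\tau(1)}\cdots g_{\tau(k)}$ over all permutations $\tau$ of $[1,k]$. *)

theory Defs
  imports "HOL-Algebra.Algebra" "HOL-Library.Multiset" "HOL-Number_Theory.Cong"
begin

definition list_prod :: "('a, 'b) monoid_scheme \<Rightarrow> 'a list \<Rightarrow> 'a" where
  "list_prod G xs = foldr (\<lambda>g acc. g \<otimes>\<^bsub>G\<^esub> acc) xs \<one>\<^bsub>G\<^esub>"

definition seq_pi :: "('a, 'b) monoid_scheme \<Rightarrow> 'a multiset \<Rightarrow> 'a set" where
  "seq_pi G S = {list_prod G xs | xs. mset xs = S}"

end

theory Submission
  imports Defs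
begin

text \<open>Write \<open>H = n/2\<close>. Taking \<open>k\<close> blocks among \<open>T\<^sub>1, ..., T\<^bsub>H-1\<^esub>\<close>, \<open>l = H - 2 - k\<close> blocks
  among \<open>T\<^sub>H, ..., T\<^bsub>n-3\<^esub>\<close> and all of \<open>T\<^sub>0\<close> gives a sequence of length \<open>n\<close>; since all the
  relevant products are powers of \<open>y\<close>, they multiply to \<open>y\<^bsup>e + 2ak + 2bl\<^esup>\<close> with
  \<open>e \<in> {2w, 2w + H}\<close>, i.e. to \<open>y\<^bsup>2(w + (H-2)b + k(a-b)) + \<epsilon>H\<^esup>\<close>. As \<open>a - b\<close> is a unit
  modulo \<open>H\<close>, the residues \<open>k\<close> for which \<open>H\<close> divides \<open>w + (H-2)b + k(a-b)\<close>, resp.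
  \<open>w + (H-2)b + k(a-b) + H/2\<close>, are distinct, so one of them lies in \<open>[0, H-2]\<close>; with the
  matching \<open>\<epsilon>\<close> the exponent is a multiple of \<open>n\<close>.\<close>

lemma exists_small_root_of_one_of_two_shifts:
  fixes H :: nat and c d :: int
  assumes "even H" "H > 0" "coprime d (int H)"
  shows "\<exists>k::nat. k \<le> H - 2 \<and>
           (int H dvd c + int k * d \<or> int H dvd c + int (H div 2) + int k * d)"
proof -
  obtain u where u: "[d * u = 1] (mod int H)"
    using cong_solve_coprime_int assms(3) by blast
  define root where "root e = nat ((- e * u) mod int H)" for e
  have root_le: "root e \<le> H - 1" for e
    using assms(2) pos_mod_bound[of "int H" "- e * u"] by (simp add: root_def nat_le_iff)
  have root_dvd: "int H dvd e + int (root e) * d" for e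
  proof -
    have "[e + ((- e * u) mod int H) * d = e + (- e * u) * d] (mod int H)"
      by (intro cong_add cong_mult cong_refl) (simp add: cong_def)
    also have "[e + (- e * u) * d = e - e * (d * u)] (mod int H)"
      by (simp add: algebra_simps)
    also have "[e - e * (d * u) = e - e * 1] (mod int H)"
      by (intro cong_diff cong_mult cong_refl u)
    finally show ?thesis
      using assms(2) by (simp add: root_def cong_0_iff)
  qed
  have "root c \<noteq> root (c + int (H div 2))"
  proof
    assume "root c = root (c + int (H div 2))"
    then have "int H dvd (c + int (H div 2) + int (root c) * d) - (c + int (root c) * d)"
      using root_dvd by (metis dvd_diff)
    then have "int H dvd int (H div 2)" by simp
    then have "H dvd H div 2" by (simp only: int_dvd_int_iff)
    with assms(1,2) show False by (auto dest: dvd_imp_le)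
  qed
  then have "root c \<le> H - 2 \<or> root (c + int (H div 2)) \<le> H - 2"
    using root_le[of c] root_le[of "c + int (H div 2)"] by linarith
  then show ?thesis
    using root_dvd[of c] root_dvd[of "c + int (H div 2)"] by (metis add.assoc)
qed

lemma exists_split_with_exponent_multiple:
  fixes H :: nat and w a b :: int
  assumes "even H" "H > 0" "coprime (a - b) (int H)"
  shows "\<exists>k l e. k + l = H - 2 \<and> e \<in> {2 * w, 2 * w + int H} \<and>
           2 * int H dvd e + (int k * (2 * a) + int l * (2 * b))"
proof -
  define c where "c = w + int (H - 2) * b"
  obtain k where k: "k \<le> H - 2"
    and hit: "int H dvd c + int k * (a - b) \<or> int H dvd c + int (H div 2) + int k * (a - b)"
    using exists_small_root_of_one_of_two_shifts[OF assms] by blast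
  define l where "l = H - 2 - k"
  have kl: "int (H - 2) = int k + int l" using k by (simp add: l_def)
  have H2: "int H = 2 * int (H div 2)" using assms(1) by (auto elim!: evenE)
  have "k + l = H - 2" using k by (simp add: l_def)
  moreover have
    "2 * int H dvd 2 * w + (int k * (2 * a) + int l * (2 * b)) \<or>
     2 * int H dvd 2 * w + int H + (int k * (2 * a) + int l * (2 * b))"
  proof -
    have "2 * w + (int k * (2 * a) + int l * (2 * b)) = 2 * (c + int k * (a - b))"
      unfolding c_def kl by (simp add: algebra_simps)
    moreover have "2 * w + int H + (int k * (2 * a) + int l * (2 * b)) =
        2 * (c + int (H div 2) + int k * (a - b))"
      unfolding c_def kl H2 by (simp add: algebra_simps)
    ultimately show ?thesis using hit by (metis mult_dvd_mono dvd_refl)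
  qed
  ultimately show ?thesis by blast
qed

lemma list_prod_closed: "monoid G \<Longrightarrow> set xs \<subseteq> carrier G \<Longrightarrow> list_prod G xs \<in> carrier G"
  by (induction xs) (auto simp: list_prod_def monoid.m_closed)

lemma list_prod_append:
  assumes "monoid G" "set xs \<subseteq> carrier G" "set ys \<subseteq> carrier G"
  shows "list_prod G (xs @ ys) = list_prod G xs \<otimes>\<^bsub>G\<^esub> list_prod G ys"
  using assms(2)
proof (induction xs)
  case Nil
  then show ?case
    using assms by (simp add: list_prod_def monoid.l_one list_prod_closed[unfolded list_prod_def])
next
  case (Cons z xs)
  then show ?case
    using assms by (simp add: list_prod_def monoid.m_assoc list_prod_closed[unfolded list_prod_def])
qed

lemma one_in_seq_pi_empty: "\<one>\<^bsub>G\<^esub> \<in> seq_pi G {#}"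
  by (force simp: seq_pi_def list_prod_def)

lemma seq_pi_add:
  assumes "monoid G" "g \<in> seq_pi G A" "h \<in> seq_pi G B"
    and "set_mset A \<subseteq> carrier G" "set_mset B \<subseteq> carrier G"
  shows "g \<otimes>\<^bsub>G\<^esub> h \<in> seq_pi G (A + B)"
proof -
  obtain xs ys where "mset xs = A" "list_prod G xs = g" "mset ys = B" "list_prod G ys = h"
    using assms(2,3) by (auto simp: seq_pi_def)
  moreover from this have "list_prod G (xs @ ys) = g \<otimes>\<^bsub>G\<^esub> h"
    using assms by (auto intro: list_prod_append)
  ultimately show ?thesis
    unfolding seq_pi_def by (metis (mono_tags) mset_append mem_Collect_eq)
qed

lemma (in group) int_pow_sum_in_seq_pi_sum:
  assumes "y \<in> carrier G" "finite I"
    and "\<And>i. i \<in> I \<Longrightarrow> set_mset (T i) \<subseteq> carrier G"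
    and "\<And>i. i \<in> I \<Longrightarrow> y [^] (c i :: int) \<in> seq_pi G (T i)"
  shows "y [^] (\<Sum>i\<in>I. c i) \<in> seq_pi G (\<Sum>i\<in>I. T i)"
  using assms(2-4)
proof (induction I rule: finite_induct)
  case empty
  then show ?case by (simp add: one_in_seq_pi_empty)
next
  case (insert j I)
  have "y [^] c j \<otimes> y [^] (\<Sum>i\<in>I. c i) \<in> seq_pi G (T j + (\<Sum>i\<in>I. T i))"
    using insert by (intro seq_pi_add monoid_axioms) (auto simp: set_mset_sum)
  with insert show ?case by (simp add: int_pow_mult assms(1))
qed

lemma (in group) exists_blocks_with_int_pow_product:
  fixes h N k l :: nat and \<alpha> \<beta> :: int
  assumes y: "y \<in> carrier G" and "k < h" "h + l \<le> N + 1"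
    and carr: "\<And>i. i \<in> {1..N} \<Longrightarrow> set_mset (T i) \<subseteq> carrier G"
    and first: "\<And>i. i \<in> {1..h - 1} \<Longrightarrow> y [^] \<alpha> \<in> seq_pi G (T i)"
    and second: "\<And>i. i \<in> {h..N} \<Longrightarrow> y [^] \<beta> \<in> seq_pi G (T i)"
  shows "\<exists>I \<subseteq> {1..N}. card I = k + l \<and>
           y [^] (int k * \<alpha> + int l * \<beta>) \<in> seq_pi G (\<Sum>i\<in>I. T i)"
proof -
  define I where "I = {1..k} \<union> {h..<h + l}"
  define c where "c i = (if i < h then \<alpha> else \<beta>)" for i
  have disj: "{1..k} \<inter> {h..<h + l} = {}" using \<open>k < h\<close> by auto
  have I_sub: "I \<subseteq> {1..N}" using assms(2,3) by (auto simp: I_def)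
  have "(\<Sum>i\<in>{1..k}. c i) = (\<Sum>i\<in>{1..k}. \<alpha>)"
    using \<open>k < h\<close> by (intro sum.cong) (auto simp: c_def)
  moreover have "(\<Sum>i\<in>{h..<h + l}. c i) = (\<Sum>i\<in>{h..<h + l}. \<beta>)"
    by (intro sum.cong) (auto simp: c_def)
  ultimately have "(\<Sum>i\<in>I. c i) = int k * \<alpha> + int l * \<beta>"
    unfolding I_def by (subst sum.union_disjoint) (use disj in auto)
  moreover have "y [^] (\<Sum>i\<in>I. c i) \<in> seq_pi G (\<Sum>i\<in>I. T i)"
    using I_sub first second assms(2,3) by (intro int_pow_sum_in_seq_pi_sum y carr) (auto simp: I_def c_def)
  moreover have "card I = k + l"
    unfolding I_def card_Un_disjoint[OF finite_atLeastAtMost finite_atLeastLessThan disj] by simp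
  ultimately show ?thesis using I_sub by metis
qed

lemma (in group) one_in_seq_pi_add:
  assumes y: "y \<in> carrier G" "y [^] (n::nat) = \<one>" and "int n dvd i + j"
    and "y [^] (i::int) \<in> seq_pi G A" "y [^] (j::int) \<in> seq_pi G B"
    and "set_mset A \<subseteq> carrier G" "set_mset B \<subseteq> carrier G"
  shows "\<one> \<in> seq_pi G (A + B)"
proof -
  have "int (ord y) dvd i + j"
    using assms(3) pow_eq_id[OF y(1)] y(2) by (meson dvd_trans int_dvd_int_iff)
  then have "y [^] i \<otimes> y [^] j = \<one>"
    using int_pow_eq_id[OF y(1)] by (simp flip: int_pow_mult[OF y(1)])
  with assms(4-) show ?thesis by (metis seq_pi_add monoid_axioms)
qed

lemma sum_mset_subset_of_subset:
  assumes "finite B" "A \<subseteq> B"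
  shows "(\<Sum>i\<in>A. f i) \<subseteq># (\<Sum>i\<in>B. f i :: 'a multiset)"
  unfolding sum.subset_diff[OF assms(2,1)] by (rule mset_subset_eq_add_right)

lemma size_sum_mset_const_size:
  assumes "\<And>i. i \<in> I \<Longrightarrow> size (f i :: 'a multiset) = c"
  shows "size (\<Sum>i\<in>I. f i) = c * card I"
  using assms by simp

theorem lemma4p1:
  fixes G (structure) and x y :: 'a and n :: nat and s w a b :: int
    and T :: "nat \<Rightarrow> 'a multiset" and T0 :: "'a multiset"
  assumes grp: "group G"
    and n_ge: "n \<ge> 8" and n_mod: "4 dvd n"
    and s_sq: "[s^2 = 1] (mod int n)"
    and s_not1: "\<not> [s = 1] (mod int n)" and s_notm1: "\<not> [s = -1] (mod int n)"
    and xy: "x \<in> carrier G" "y \<in> carrier G"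
    and gen: "generate G {x, y} = carrier G"
    and rel1: "x [^] (2::nat) = y [^] (n div 2)"
    and rel2: "y [^] n = \<one>"
    and rel3: "y \<otimes> x = x \<otimes> y [^] s"
    and ord: "order G = 2 * n"
    and T_carr: "\<And>i. i \<in> {1..n-3} \<Longrightarrow> set_mset (T i) \<subseteq> carrier G"
    and T_size: "\<And>i. i \<in> {1..n-3} \<Longrightarrow> size (T i) = 2"
    and T0_carr: "set_mset T0 \<subseteq> carrier G"
    and T0_size: "size T0 = 4"
    and T0_pi: "{y [^] (2*w), y [^] (2*w + int n div 2)} \<subseteq> seq_pi G T0"
    and ab_gcd: "gcd (a - b) (int n div 2) = 1"
    and Ta: "\<And>i. i \<in> {1..n div 2 - 1} \<Longrightarrow> y [^] (2*a) \<in> seq_pi G (T i)"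
    and Tb: "\<And>i. i \<in> {n div 2..n-3} \<Longrightarrow> y [^] (2*b) \<in> seq_pi G (T i)"
  shows "\<exists>T'. T' \<subseteq># (\<Sum>i\<in>{1..n-3}. T i) + T0 \<and> size T' = n
              \<and> \<one> \<in> seq_pi G T' \<and> T0 \<subseteq># T'"
proof -
  interpret group G by (rule grp)
  define H where "H = n div 2"
  have n_eq: "n = 2 * H" "even H" "H \<ge> 4" "int n div 2 = int H" "int n = 2 * int H"
    using n_mod n_ge by (auto simp: H_def)
  have ab_coprime: "coprime (a - b) (int H)"
    using ab_gcd by (simp add: n_eq(4) coprime_iff_gcd_eq_1)
  obtain k l e where kl: "k + l = H - 2" and e: "e \<in> {2 * w, 2 * w + int H}"
    and e_dvd: "2 * int H dvd e + (int k * (2 * a) + int l * (2 * b))"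
    using exists_split_with_exponent_multiple[OF n_eq(2) _ ab_coprime, where w = w] n_eq(3) by auto
  have counts: "k < n div 2" "n div 2 + l \<le> n - 3 + 1"
    unfolding H_def[symmetric] using kl n_eq(1,3) by linarith+
  have "\<exists>I \<subseteq> {1..n - 3}. card I = k + l \<and>
      y [^] (int k * (2 * a) + int l * (2 * b)) \<in> seq_pi G (\<Sum>i\<in>I. T i)"
    by (rule exists_blocks_with_int_pow_product[OF xy(2) counts]) (fact T_carr Ta Tb)+
  then obtain I where I: "I \<subseteq> {1..n - 3}" "card I = H - 2"
    and I_pi: "y [^] (int k * (2 * a) + int l * (2 * b)) \<in> seq_pi G (\<Sum>i\<in>I. T i)"
    using kl by auto
  define T' where "T' = T0 + (\<Sum>i\<in>I. T i)"
  have "set_mset (\<Sum>i\<in>I. T i) \<subseteq> carrier G"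
    unfolding set_mset_sum[OF finite_subset[OF I(1) finite_atLeastAtMost]] using T_carr I(1) by blast
  moreover have "y [^] e \<in> seq_pi G T0" using T0_pi e n_eq(4) by auto
  ultimately have "\<one> \<in> seq_pi G T'"
    unfolding T'_def using one_in_seq_pi_add[OF xy(2) rel2 e_dvd[folded n_eq(5)]] I_pi T0_carr by blast
  moreover have "size (\<Sum>i\<in>I. T i) = 2 * card I"
    using T_size I(1) by (intro size_sum_mset_const_size) blast
  then have "size T' = n"
    using T0_size I(2) n_eq(1,3) by (simp add: T'_def)
  moreover have "T' \<subseteq># (\<Sum>i\<in>{1..n-3}. T i) + T0"
    unfolding T'_def add.commute[of T0]
    by (intro subset_mset.add_right_mono sum_mset_subset_of_subset[OF finite_atLeastAtMost I(1)])
  ultimately show ?thesis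
    using mset_subset_eq_add_left[of T0] unfolding T'_def by blast
qed

end
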